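(* Let $p,q\in\mathbb{C}$ and let $\phi:\mathbb{R}^4\ni(u,s,v,t)\mapsto(u_2,s_2,v_1,t_1)\in\mathbb{R}^4$ be the map defined by $$u_2=v+t\frac{p-q}{s-t},\qquad v_1=u+s\frac{p-q}{s-t},\qquad s_2=\frac{1}{t}+\frac{p-q}{t(u-v)},\qquad t_1=\frac{1}{s}+\frac{p-q}{s(u-v)}.$$ Set $n(u,s,v,t)=(p-q+u-v)t-s(u-v)$ and $d(u,s,v,t)=(p-q+u-v)s-t(u-v)$. Then: (1) $\phi$ is measure preserving with density $m(u,s,v,t)=n(u,s,v,t)\,d(u,s,v,t)$; (2) $\phi$ preserves the Poisson structure $$\Omega=n\,\frac{s}{t}\,\frac{\partial}{\partial u}\wedge\frac{\partial}{\partial s}-d\,\frac{\partial}{\partial u}\wedge\frac{\partial}{\partial t}-n\,\frac{s}{t}\,\frac{\partial}{\partial s}\wedge\frac{\partial}{\partial v}-d\,\frac{\partial}{\partial v}\wedge\frac{\partial}{\partial t},$$ where $n=n(u,s,v,t)$, $d=d(u,s,v,t)$; (3) $\phi$ is a Liouville integrable map.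
   Context: A map $\phi:(u,s,v,t)\mapsto(u_2,s_2,v_1,t_1)$ is called measure preserving with density $m$ if $m(u_2,s_2,v_1,t_1)=\dfrac{\partial(u_2,s_2,v_1,t_1)}{\partial(u,s,v,t)}\,m(u,s,v,t)$, where the fraction denotes the Jacobian determinant of $\phi$. Liouville integrability of a map is meant in the standard sense (preservation of a Poisson structure together with a sufficient number of functionally independent invariants in involution). *)

theory Defs
  imports "HOL-Analysis.Analysis"
begin

(* Coordinates on R^4: x$1 = u, x$2 = s, x$3 = v, x$4 = t.
   c stands for the parameter difference p - q. *)

definition phi_map :: "real \<Rightarrow> real^4 \<Rightarrow> real^4" where
  "phi_map c x = (let u = x$1; s = x$2; v = x$3; t = x$4 in
     vector [v + t * c / (s - t),
             1 / t + c / (t * (u - v)),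
             u + s * c / (s - t),
             1 / s + c / (s * (u - v))])"

definition dom_phi :: "(real^4) set" where
  "dom_phi = {x. x$2 \<noteq> x$4 \<and> x$4 \<noteq> 0 \<and> x$2 \<noteq> 0 \<and> x$1 \<noteq> x$3}"

definition n_fun :: "real \<Rightarrow> real^4 \<Rightarrow> real" where
  "n_fun c x = (c + x$1 - x$3) * x$4 - x$2 * (x$1 - x$3)"

definition d_fun :: "real \<Rightarrow> real^4 \<Rightarrow> real" where
  "d_fun c x = (c + x$1 - x$3) * x$2 - x$4 * (x$1 - x$3)"

text \<open>The bivector Omega as a skew matrix: a du/\ds contributes Omega_us = a, Omega_su = -a.\<close>
definition omega :: "real \<Rightarrow> real^4 \<Rightarrow> real^4^4" where
  "omega c x = (let N = n_fun c x; D = d_fun c x; s = x$2; t = x$4 in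
     (\<chi> i j. if (i, j) = (1, 2) then N * s / t
             else if (i, j) = (2, 1) then - (N * s / t)
             else if (i, j) = (1, 4) then - D
             else if (i, j) = (4, 1) then D
             else if (i, j) = (2, 3) then - (N * s / t)
             else if (i, j) = (3, 2) then N * s / t
             else if (i, j) = (3, 4) then - D
             else if (i, j) = (4, 3) then D
             else 0))"

definition measure_preserving_density ::
  "(real^'n \<Rightarrow> real^'n) \<Rightarrow> (real^'n \<Rightarrow> real) \<Rightarrow> (real^'n) set \<Rightarrow> bool" where
  "measure_preserving_density f m D \<longleftrightarrow>
     (\<forall>x\<in>D. f differentiable (at x) \<and>
        m (f x) = det (jacobian f (at x)) * m x)"

definition pd :: "(real^'n \<Rightarrow> real) \<Rightarrow> 'n \<Rightarrow> real^'n \<Rightarrow> real" where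
  "pd g i x = frechet_derivative g (at x) (axis i 1)"

definition grad :: "(real^'n \<Rightarrow> real) \<Rightarrow> real^'n \<Rightarrow> real^'n" where
  "grad g x = (\<chi> i. pd g i x)"

definition poisson_structure :: "(real^'n \<Rightarrow> real^'n^'n) \<Rightarrow> (real^'n) set \<Rightarrow> bool" where
  "poisson_structure P D \<longleftrightarrow> open D \<and>
     (\<forall>x\<in>D. transpose (P x) = - P x) \<and>
     (\<forall>x\<in>D. \<forall>i j. (\<lambda>y. P y $ i $ j) differentiable (at x)) \<and>
     (\<forall>x\<in>D. \<forall>i j k.
        (\<Sum>l\<in>UNIV. P x $ l $ i * pd (\<lambda>y. P y $ j $ k) l x
                  + P x $ l $ j * pd (\<lambda>y. P y $ k $ i) l x
                  + P x $ l $ k * pd (\<lambda>y. P y $ i $ j) l x) = 0)"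

definition preserves_poisson ::
  "(real^'n \<Rightarrow> real^'n) \<Rightarrow> (real^'n \<Rightarrow> real^'n^'n) \<Rightarrow> (real^'n) set \<Rightarrow> bool" where
  "preserves_poisson f P D \<longleftrightarrow>
     (\<forall>x\<in>D. f x \<in> D \<longrightarrow> f differentiable (at x) \<and>
        jacobian f (at x) ** P x ** transpose (jacobian f (at x)) = P (f x))"

definition pbracket :: "(real^'n \<Rightarrow> real^'n^'n) \<Rightarrow> (real^'n \<Rightarrow> real) \<Rightarrow> (real^'n \<Rightarrow> real) \<Rightarrow> real^'n \<Rightarrow> real" where
  "pbracket P F G x = grad F x \<bullet> (P x *v grad G x)"

text \<open>Liouville integrability: a preserved Poisson structure of (generic = maximal) rank 2r
  on D, together with N - r invariants (N the dimension) that are pairwise in involution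
  and functionally independent (gradients linearly independent on a dense subset of D).\<close>
definition liouville_integrable :: "(real^'n \<Rightarrow> real^'n) \<Rightarrow> (real^'n) set \<Rightarrow> bool" where
  "liouville_integrable f D \<longleftrightarrow>
     (\<exists>P r Fs. poisson_structure P D \<and> preserves_poisson f P D \<and>
        (\<forall>x\<in>D. rank (P x) \<le> 2 * r) \<and> (\<exists>x\<in>D. rank (P x) = 2 * r) \<and>
        length Fs = CARD('n) - r \<and>
        (\<forall>F\<in>set Fs. \<forall>x\<in>D. F differentiable (at x)) \<and>
        (\<forall>F\<in>set Fs. \<forall>x\<in>D. f x \<in> D \<longrightarrow> F (f x) = F x) \<and>
        (\<forall>F\<in>set Fs. \<forall>G\<in>set Fs. \<forall>x\<in>D. pbracket P F G x = 0) \<and>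
        D \<subseteq> closure {x\<in>D. distinct (map (\<lambda>F. grad F x) Fs) \<and>
                               independent (set (map (\<lambda>F. grad F x) Fs))})"

end

(*
  The Jacobian J of phi is explicit. Its determinant is (u - v + c)^2 / (s t (u - v))^2, and phi
  exchanges n and d up to the factor (u - v + c) / (s t (u - v)); this gives the density.

  Write d_u, d_s, d_v, d_t for the coordinate vector fields. Omega is the decomposable bivector
  (d_u + d_v) /\ f with f = (n s / t) d_s - d(u, s, v, t) d_t. A bivector
  a /\ f + b /\ g with constant a, b is Poisson as soon as f and g are invariant along a and b and
  [f, g] = 0. Since phi commutes with the translations (u, v) |-> (u + l, v + l), J fixes d_u + d_v,
  and J f agrees with f o phi modulo d_u + d_v, so J Omega J^T = Omega o phi.

  Omega has rank 2, so for Liouville integrability we use instead the nondegenerate bivector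
  (d_u + d_v) /\ (t d_s - (t^2 / s) d_t) - 2 (d_u - d_v) /\ (s d_s + t d_t), which phi preserves
  by a similar computation. The invariants s / t and (u - v)(u - v + c) are in involution for it, and
  their gradients are independent off the hypersurface 2 (u - v) + c = 0.
*)

theory Submission
  imports Defs
begin

lemma vector_4 [simp]:
  "(vector [x, y, z, w] :: 'a::zero^4) $ 1 = x"
  "(vector [x, y, z, w] :: 'a::zero^4) $ 2 = y"
  "(vector [x, y, z, w] :: 'a::zero^4) $ 3 = z"
  "(vector [x, y, z, w] :: 'a::zero^4) $ 4 = w"
  unfolding vector_def by simp_all

lemma vector_4_cases:
  obtains a b c d where "(x :: 'a::zero^4) = vector [a, b, c, d]"
proof
  show "x = vector [x$1, x$2, x$3, x$4]"
    by (simp add: vec_eq_iff forall_4)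
qed

lemma inner_vector_4: "(vector [a, b, c, d] :: real^4) \<bullet> h = a * h$1 + b * h$2 + c * h$3 + d * h$4"
  unfolding inner_vec_def sum_4 by simp

lemma matrix_vector_mult_vector_4:
  "(vector [r1, r2, r3, r4] :: real^4^4) *v h = vector [r1 \<bullet> h, r2 \<bullet> h, r3 \<bullet> h, r4 \<bullet> h]"
  by (simp add: vec_eq_iff forall_4 matrix_vector_mul_component)

lemma det_4:
  "det (A::'a::comm_ring_1^4^4) =
    A$1$1 * A$2$2 * A$3$3 * A$4$4 - A$1$1 * A$2$2 * A$3$4 * A$4$3
  - A$1$1 * A$2$3 * A$3$2 * A$4$4 + A$1$1 * A$2$3 * A$3$4 * A$4$2
  + A$1$1 * A$2$4 * A$3$2 * A$4$3 - A$1$1 * A$2$4 * A$3$3 * A$4$2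
  - A$1$2 * A$2$1 * A$3$3 * A$4$4 + A$1$2 * A$2$1 * A$3$4 * A$4$3
  + A$1$2 * A$2$3 * A$3$1 * A$4$4 - A$1$2 * A$2$3 * A$3$4 * A$4$1
  - A$1$2 * A$2$4 * A$3$1 * A$4$3 + A$1$2 * A$2$4 * A$3$3 * A$4$1
  + A$1$3 * A$2$1 * A$3$2 * A$4$4 - A$1$3 * A$2$1 * A$3$4 * A$4$2
  - A$1$3 * A$2$2 * A$3$1 * A$4$4 + A$1$3 * A$2$2 * A$3$4 * A$4$1
  + A$1$3 * A$2$4 * A$3$1 * A$4$2 - A$1$3 * A$2$4 * A$3$2 * A$4$1
  - A$1$4 * A$2$1 * A$3$2 * A$4$3 + A$1$4 * A$2$1 * A$3$3 * A$4$2
  + A$1$4 * A$2$2 * A$3$1 * A$4$3 - A$1$4 * A$2$2 * A$3$3 * A$4$1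
  - A$1$4 * A$2$3 * A$3$1 * A$4$2 + A$1$4 * A$2$3 * A$3$2 * A$4$1"
proof -
  have f1: "finite {2::4, 3, 4}" "1 \<notin> {2::4, 3, 4}"
    and f2: "finite {3::4, 4}" "2 \<notin> {3::4, 4}"
    and f3: "finite {4::4}" "3 \<notin> {4::4}"
    by auto
  show ?thesis
    unfolding det_def UNIV_4 sum_over_permutations_insert[OF f1] sum_over_permutations_insert[OF f2]
      sum_over_permutations_insert[OF f3] permutes_sing
    by (simp add: sign_swap_id permutation_swap_id permutation_compose sign_compose sign_id
        swap_id_eq)
qed

lemma matrix_add_rdistrib: "(A + B) ** C = A ** C + B ** C"
  by (simp add: matrix_matrix_mult_def vec_eq_iff sum.distrib distrib_right)

lemma has_derivative_vec_nth [derivative_intros]: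
  "((\<lambda>x::real^'n. x $ i) has_derivative (\<lambda>h. h $ i)) (at x within S)"
  by (rule bounded_linear_imp_has_derivative) (rule bounded_linear_vec_nth)

lemma has_derivative_vec_nth_matrix:
  assumes "(f has_derivative (\<lambda>h. F *v h)) (at x)"
  shows "((\<lambda>y. f y $ k) has_derivative (\<lambda>h. F $ k \<bullet> h)) (at x)"
  using bounded_linear.has_derivative[OF bounded_linear_vec_nth assms]
  by (simp add: matrix_vector_mul_component)

lemma has_derivative_vec_rows:
  fixes f :: "real^'n \<Rightarrow> real^'m"
  assumes "\<And>i. ((\<lambda>x. f x $ i) has_derivative (\<lambda>h. M $ i \<bullet> h)) (at a)"
  shows "(f has_derivative (\<lambda>h. M *v h)) (at a)"
proof -
  have "((\<lambda>x. \<Sum>i\<in>UNIV. f x $ i *\<^sub>R axis i 1) has_derivative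
          (\<lambda>h. \<Sum>i\<in>UNIV. (M $ i \<bullet> h) *\<^sub>R axis i (1::real))) (at a)"
    by (intro has_derivative_sum bounded_linear.has_derivative[OF bounded_linear_scaleR_left] assms)
  moreover have "(\<Sum>i\<in>UNIV. (y $ i) *\<^sub>R axis i (1::real)) = y" for y :: "real^'m"
    using basis_expansion by (metis (no_types) scalar_mult_eq_scaleR sum.cong)
  ultimately show ?thesis
    by (simp add: matrix_vector_mul_component[symmetric])
qed

lemma has_derivative_vector_4:
  assumes "(f1 has_derivative (\<lambda>h. r1 \<bullet> h)) (at x)" "(f2 has_derivative (\<lambda>h. r2 \<bullet> h)) (at x)"
    "(f3 has_derivative (\<lambda>h. r3 \<bullet> h)) (at x)" "(f4 has_derivative (\<lambda>h. r4 \<bullet> h)) (at x)"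
  shows "((\<lambda>y. vector [f1 y, f2 y, f3 y, f4 y] :: real^4) has_derivative
           (\<lambda>h. vector [r1, r2, r3, r4] *v h)) (at x)"
proof (rule has_derivative_vec_rows)
  fix i :: 4
  show "((\<lambda>y. (vector [f1 y, f2 y, f3 y, f4 y] :: real^4) $ i) has_derivative
          (\<lambda>h. vector [r1, r2, r3, r4] $ i \<bullet> h)) (at x)"
    using exhaust_4[of i] assms by auto
qed

lemma jacobian_eqI:
  fixes f :: "real^'n \<Rightarrow> real^'m"
  assumes "(f has_derivative (\<lambda>h. M *v h)) (at x)"
  shows "jacobian f (at x) = M"
  unfolding jacobian_def frechet_derivative_at[OF assms, symmetric]
  by simp

lemma pd_eqI:
  assumes "(g has_derivative (\<lambda>h. G \<bullet> h)) (at x)"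
  shows "pd g i x = G $ i"
  unfolding pd_def frechet_derivative_at[OF assms, symmetric] by (simp add: inner_axis)

lemma grad_eqI:
  assumes "(g has_derivative (\<lambda>h. G \<bullet> h)) (at x)"
  shows "grad g x = G"
  unfolding grad_def pd_eqI[OF assms] by simp

lemma independent_pair_vec:
  fixes a b :: "real^'n"
  assumes "a $ i \<noteq> 0" "b $ i = 0" "b \<noteq> 0"
  shows "a \<noteq> b \<and> independent {a, b}"
proof
  show "a \<noteq> b" using assms by auto
  have "a \<notin> span {b}"
  proof
    assume "a \<in> span {b}"
    then obtain r where "a = r *\<^sub>R b" by (auto simp: span_singleton)
    then show False using assms by simp
  qed
  moreover have "independent {b}" using assms(3) by simp
  ultimately show "independent {a, b}" by (simp add: independent_insertI)
qed

section \<open>Wedge products and Poisson bivectors\<close>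

definition wedge :: "real^'n \<Rightarrow> real^'n \<Rightarrow> real^'n^'n" where
  "wedge a b = (\<chi> i j. a$i * b$j - b$i * a$j)"

lemma wedge_nth [simp]: "wedge a b $ i $ j = a$i * b$j - b$i * a$j"
  by (simp add: wedge_def)

lemma wedge_add_left: "wedge (a + a') b = wedge a b + wedge a' b"
  by (simp add: vec_eq_iff algebra_simps)

lemma wedge_uminus: "wedge (- a) (- b) = wedge a b"
  by (simp add: vec_eq_iff)

lemma wedge_scaleR_self: "wedge (r *\<^sub>R b) b = 0"
  by (simp add: vec_eq_iff)

lemma wedge_add_scaleR_self: "wedge a (b + r *\<^sub>R a) = wedge a b"
  by (simp add: vec_eq_iff algebra_simps)

lemma matrix_wedge_transpose: "A ** wedge a b ** transpose A = wedge (A *v a) (A *v b)"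
proof -
  have row: "(\<Sum>k\<in>UNIV. A $ i $ k * (a $ k * b $ j - b $ k * a $ j))
      = (A *v a)$i * b$j - (A *v b)$i * a$j" for i j
    by (simp add: matrix_vector_mult_def right_diff_distrib sum_subtractf sum_distrib_left mult_ac)
  have col: "(\<Sum>k\<in>UNIV. (p * b $ k - q * a $ k) * A $ j $ k)
      = p * (A *v b)$j - q * (A *v a)$j" for p q j
    by (simp add: matrix_vector_mult_def sum_distrib_left algebra_simps sum_subtractf)
  show ?thesis
    by (simp add: vec_eq_iff matrix_matrix_mult_def transpose_def row col)
qed

lemma matrix_vector_mult_wedge: "wedge a b *v z = (b \<bullet> z) *\<^sub>R a - (a \<bullet> z) *\<^sub>R b"
  by (simp add: vec_eq_iff matrix_vector_mult_def inner_vec_def sum_subtractf sum_distrib_left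
      sum_distrib_right algebra_simps)

lemma has_derivative_wedge_nth:
  assumes "\<And>k. ((\<lambda>y. f y $ k) has_derivative (\<lambda>h. F k \<bullet> h)) (at x)"
  shows "((\<lambda>y. wedge a (f y) $ i $ j) has_derivative
           (\<lambda>h. (a$i *\<^sub>R F j - a$j *\<^sub>R F i) \<bullet> h)) (at x)"
  unfolding wedge_nth
  by (rule derivative_eq_intros assms refl)+ (simp add: inner_diff_left algebra_simps)

lemma sum_wedge_nth_mult:
  "(\<Sum>l\<in>UNIV. wedge a v $ l $ i * d $ l) = v$i * (a \<bullet> d) - a$i * (v \<bullet> d)"
  by (simp add: inner_vec_def sum_subtractf sum_distrib_left algebra_simps)

definition jacobiator :: "(real^'n \<Rightarrow> real^'n^'n) \<Rightarrow> real^'n \<Rightarrow> 'n \<Rightarrow> 'n \<Rightarrow> 'n \<Rightarrow> real" where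
  "jacobiator P x i j k =
     (\<Sum>l\<in>UNIV. P x $ l $ i * pd (\<lambda>y. P y $ j $ k) l x
              + P x $ l $ j * pd (\<lambda>y. P y $ k $ i) l x
              + P x $ l $ k * pd (\<lambda>y. P y $ i $ j) l x)"

lemma poisson_structure_iff_jacobiator:
  "poisson_structure P D \<longleftrightarrow> open D \<and>
     (\<forall>x\<in>D. transpose (P x) = - P x) \<and>
     (\<forall>x\<in>D. \<forall>i j. (\<lambda>y. P y $ i $ j) differentiable (at x)) \<and>
     (\<forall>x\<in>D. \<forall>i j k. jacobiator P x i j k = 0)"
  unfolding poisson_structure_def jacobiator_def ..

lemma jacobiator_wedge_pair:
  fixes a b :: "real^'n" and f g :: "real^'n \<Rightarrow> real^'n"
  assumes f: "(f has_derivative (\<lambda>h. F *v h)) (at x)"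
    and g: "(g has_derivative (\<lambda>h. G *v h)) (at x)"
    and invariant: "F *v a = 0" "F *v b = 0" "G *v a = 0" "G *v b = 0"
    and commute: "F *v g x = G *v f x"
  shows "jacobiator (\<lambda>y. wedge a (f y) + wedge b (g y)) x i j k = 0"
  \<comment> \<open>\<open>invariant\<close>: f and g are invariant along the constant fields a and b;
    \<open>commute\<close>: the Lie bracket [f, g] vanishes at x\<close>
proof -
  have Fa: "F$k \<bullet> a = 0" and Fb: "F$k \<bullet> b = 0"
    and Ga: "G$k \<bullet> a = 0" and Gb: "G$k \<bullet> b = 0"
    and Fg: "F$k \<bullet> g x = G$k \<bullet> f x" for k
    using invariant commute by (simp_all add: vec_eq_iff matrix_vector_mul_component)
  define D where "D j k = a$j *\<^sub>R F$k - a$k *\<^sub>R F$j + b$j *\<^sub>R G$k - b$k *\<^sub>R G$j" for j k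
  have pd: "pd (\<lambda>y. (wedge a (f y) + wedge b (g y)) $ j $ k) l x = D j k $ l" for j k l
  proof (rule pd_eqI)
    show "((\<lambda>y. (wedge a (f y) + wedge b (g y)) $ j $ k) has_derivative (\<lambda>h. D j k \<bullet> h))
        (at x)"
      using has_derivative_add[OF has_derivative_wedge_nth has_derivative_wedge_nth,
          OF has_derivative_vec_nth_matrix[OF f] has_derivative_vec_nth_matrix[OF g]]
      by (simp add: D_def inner_add_left inner_diff_left algebra_simps)
  qed
  have contract: "(\<Sum>l\<in>UNIV. (wedge a (f x) + wedge b (g x)) $ l $ i * d $ l)
      = f x $ i * (a \<bullet> d) - a $ i * (f x \<bullet> d) + g x $ i * (b \<bullet> d) - b $ i * (g x \<bullet> d)"
    for i d
    by (simp only: vector_add_component distrib_right sum.distrib sum_wedge_nth_mult)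
  have a_D: "a \<bullet> D j k = 0" and b_D: "b \<bullet> D j k = 0" for j k
    using Fa Fb Ga Gb by (simp_all add: D_def inner_add_right inner_diff_right inner_commute)
  have f_D: "f x \<bullet> D j k
      = a$j * (F$k \<bullet> f x) - a$k * (F$j \<bullet> f x) + b$j * (G$k \<bullet> f x) - b$k * (G$j \<bullet> f x)"
   and g_D: "g x \<bullet> D j k
      = a$j * (G$k \<bullet> f x) - a$k * (G$j \<bullet> f x) + b$j * (G$k \<bullet> g x) - b$k * (G$j \<bullet> g x)"
    for j k
    using Fg by (simp_all add: D_def inner_add_right inner_diff_right inner_commute)
  show ?thesis
    unfolding jacobiator_def pd sum.distrib contract a_D b_D f_D g_D
    by (simp add: algebra_simps)
qed

lemma poisson_structure_wedge_pair:
  fixes a b :: "real^'n" and f g :: "real^'n \<Rightarrow> real^'n"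
  assumes "open D"
    and f: "\<And>x. x \<in> D \<Longrightarrow> (f has_derivative (\<lambda>h. F x *v h)) (at x)"
    and g: "\<And>x. x \<in> D \<Longrightarrow> (g has_derivative (\<lambda>h. G x *v h)) (at x)"
    and invariant:
      "\<And>x. x \<in> D \<Longrightarrow> F x *v a = 0 \<and> F x *v b = 0 \<and> G x *v a = 0 \<and> G x *v b = 0"
    and commute: "\<And>x. x \<in> D \<Longrightarrow> F x *v g x = G x *v f x"
  shows "poisson_structure (\<lambda>y. wedge a (f y) + wedge b (g y)) D"
  unfolding poisson_structure_iff_jacobiator
proof (intro conjI ballI allI)
  fix x i j assume x: "x \<in> D"
  show "(\<lambda>y. (wedge a (f y) + wedge b (g y)) $ i $ j) differentiable (at x)"
    using differentiable_add[OF
        differentiableI[OF has_derivative_wedge_nth[OF has_derivative_vec_nth_matrix[OF f[OF x]]]]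
        differentiableI[OF has_derivative_wedge_nth[OF has_derivative_vec_nth_matrix[OF g[OF x]]]]]
    by simp
next
  fix x assume "x \<in> D"
  show "transpose (wedge a (f x) + wedge b (g x)) = - (wedge a (f x) + wedge b (g x))"
    by (simp add: vec_eq_iff transpose_def)
next
  fix x i j k assume x: "x \<in> D"
  show "jacobiator (\<lambda>y. wedge a (f y) + wedge b (g y)) x i j k = 0"
    using jacobiator_wedge_pair[OF f[OF x] g[OF x]] invariant[OF x] commute[OF x] by blast
qed (rule \<open>open D\<close>)

lemma poisson_structure_wedge:
  fixes a :: "real^'n" and f :: "real^'n \<Rightarrow> real^'n"
  assumes "open D"
    and "\<And>x. x \<in> D \<Longrightarrow> (f has_derivative (\<lambda>h. F x *v h)) (at x)"
    and "\<And>x. x \<in> D \<Longrightarrow> F x *v a = 0"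
  shows "poisson_structure (\<lambda>y. wedge a (f y)) D"
proof -
  have "(\<lambda>y. wedge a (f y)) = (\<lambda>y. wedge a (f y) + wedge 0 0)"
    by (simp add: fun_eq_iff vec_eq_iff)
  moreover have "poisson_structure (\<lambda>y. wedge a (f y) + wedge 0 0) D"
    by (rule poisson_structure_wedge_pair[where G = "\<lambda>_. 0"]) (use assms in auto)
  ultimately show ?thesis
    by simp
qed

lemma preserves_poissonI:
  fixes f :: "real^'n \<Rightarrow> real^'n"
  assumes "\<And>x. x \<in> D \<Longrightarrow> (f has_derivative (\<lambda>h. J x *v h)) (at x)"
    and "\<And>x. x \<in> D \<Longrightarrow> f x \<in> D \<Longrightarrow> J x ** P x ** transpose (J x) = P (f x)"
  shows "preserves_poisson f P D"
  unfolding preserves_poisson_def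
  using assms jacobian_eqI differentiableI by metis

section \<open>The map phi and its Jacobian\<close>

lemma dom_phiD:
  assumes "x \<in> dom_phi"
  shows "x$2 - x$4 \<noteq> 0" "x$4 \<noteq> 0" "x$2 \<noteq> 0" "x$1 - x$3 \<noteq> 0"
  using assms by (auto simp: dom_phi_def)

lemma open_dom_phi: "open dom_phi"
  unfolding dom_phi_def by (intro open_Collect_conj open_Collect_neq continuous_intros)

lemma shifted_uv_difference_nonzero:
  assumes "x \<in> dom_phi" "phi_map c x \<in> dom_phi"
  shows "x$1 - x$3 + c \<noteq> 0"
proof
  assume "x$1 - x$3 + c = 0"
  then have "phi_map c x $ 4 = 0"
    using dom_phiD[OF assms(1)] by (simp add: phi_map_def Let_def divide_simps)
  then show False
    using dom_phiD(2)[OF assms(2)] by simp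
qed

definition phi_jacobian :: "real \<Rightarrow> real^4 \<Rightarrow> real^4^4" where
  "phi_jacobian c x = (let u = x$1; s = x$2; v = x$3; t = x$4; w = u - v in
     vector [vector [0, - (t * c / (s - t)^2), 1, s * c / (s - t)^2],
             vector [- (c / (t * w^2)), 0, c / (t * w^2), - (1 / t^2) - c / (t^2 * w)],
             vector [1, - (t * c / (s - t)^2), 0, s * c / (s - t)^2],
             vector [- (c / (s * w^2)), - (1 / s^2) - c / (s^2 * w), c / (s * w^2), 0]])"

lemma has_derivative_phi_map:
  assumes "x \<in> dom_phi"
  shows "(phi_map c has_derivative (\<lambda>h. phi_jacobian c x *v h)) (at x)"
proof -
  note nz = dom_phiD[OF assms]
  have nz': "x$4 * (x$1 - x$3) \<noteq> 0" "x$2 * (x$1 - x$3) \<noteq> 0"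
    using nz by simp_all
  show ?thesis
    unfolding phi_map_def phi_jacobian_def Let_def
    by (intro has_derivative_vector_4; (rule derivative_eq_intros refl nz nz')+; rule ext;
        simp add: inner_vector_4 divide_simps power2_eq_square nz; simp add: algebra_simps)
qed

lemma det_phi_jacobian:
  assumes "x \<in> dom_phi"
  shows "det (phi_jacobian c x) = (x$1 - x$3 + c)^2 / (x$2 * x$4 * (x$1 - x$3))^2"
proof -
  obtain u s v t where x: "x = vector [u, s, v, t]"
    using vector_4_cases by blast
  have "det (phi_jacobian c x) = (1 / t^2 + c / (t^2 * (u - v))) * (1 / s^2 + c / (s^2 * (u - v)))"
    unfolding x det_4 phi_jacobian_def Let_def vector_4 by (simp add: algebra_simps)
  also have "\<dots> = (u - v + c)^2 / (s * t * (u - v))^2"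
    using dom_phiD[OF assms] unfolding x
    by (simp add: divide_simps) (simp add: algebra_simps power2_eq_square)
  finally show ?thesis unfolding x by simp
qed

lemma n_fun_phi_map:
  assumes "x \<in> dom_phi"
  shows "n_fun c (phi_map c x) = (x$1 - x$3 + c) * d_fun c x / (x$2 * x$4 * (x$1 - x$3))"
proof -
  obtain u s v t where x: "x = vector [u, s, v, t]"
    using vector_4_cases by blast
  show ?thesis using dom_phiD[OF assms] unfolding x
    by (simp add: n_fun_def d_fun_def phi_map_def Let_def divide_simps) (simp add: algebra_simps)
qed

lemma d_fun_phi_map:
  assumes "x \<in> dom_phi"
  shows "d_fun c (phi_map c x) = (x$1 - x$3 + c) * n_fun c x / (x$2 * x$4 * (x$1 - x$3))"
proof -
  obtain u s v t where x: "x = vector [u, s, v, t]"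
    using vector_4_cases by blast
  show ?thesis using dom_phiD[OF assms] unfolding x
    by (simp add: n_fun_def d_fun_def phi_map_def Let_def divide_simps) (simp add: algebra_simps)
qed

lemma measure_preserving_phi_map:
  "measure_preserving_density (phi_map c) (\<lambda>x. n_fun c x * d_fun c x) dom_phi"
  unfolding measure_preserving_density_def
proof (intro ballI conjI)
  fix x assume x: "x \<in> dom_phi"
  show "phi_map c differentiable at x"
    using has_derivative_phi_map[OF x] by (rule differentiableI)
  show "n_fun c (phi_map c x) * d_fun c (phi_map c x)
      = det (jacobian (phi_map c) (at x)) * (n_fun c x * d_fun c x)"
    unfolding jacobian_eqI[OF has_derivative_phi_map[OF x]] det_phi_jacobian[OF x]
      n_fun_phi_map[OF x] d_fun_phi_map[OF x]
    by (simp add: power2_eq_square)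
qed

section \<open>The Poisson structure Omega\<close>

definition du_plus_dv :: "real^4" where
  "du_plus_dv = vector [1, 0, 1, 0]"

definition omega_field :: "real \<Rightarrow> real^4 \<Rightarrow> real^4" where
  "omega_field c y = vector [0, n_fun c y * y$2 / y$4, 0, - d_fun c y]"

lemma omega_eq_wedge: "omega c = (\<lambda>y. wedge du_plus_dv (omega_field c y))"
  by (simp add: fun_eq_iff vec_eq_iff forall_4 omega_def Let_def du_plus_dv_def omega_field_def)

definition omega_field_jacobian :: "real \<Rightarrow> real^4 \<Rightarrow> real^4^4" where
  "omega_field_jacobian c y = (let u = y$1; s = y$2; v = y$3; t = y$4 in
     vector [0,
             vector [(t - s) * s / t, c + u - v - 2 * (u - v) * s / t, - ((t - s) * s / t),
                     s^2 * (u - v) / t^2],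
             0,
             vector [t - s, - (c + u - v), - (t - s), u - v]])"

lemma has_derivative_omega_field:
  assumes "y$4 \<noteq> 0"
  shows "(omega_field c has_derivative (\<lambda>h. omega_field_jacobian c y *v h)) (at y)"
  unfolding omega_field_def omega_field_jacobian_def n_fun_def d_fun_def Let_def
  by (intro has_derivative_vector_4; (rule derivative_eq_intros refl assms)+; (rule ext)?;
      simp add: inner_vector_4 divide_simps power2_eq_square assms; simp add: algebra_simps)

lemma omega_field_jacobian_du_plus_dv: "omega_field_jacobian c y *v du_plus_dv = 0"
  unfolding omega_field_jacobian_def du_plus_dv_def Let_def matrix_vector_mult_vector_4
    inner_vector_4
  by (simp add: vec_eq_iff forall_4)

lemma poisson_structure_omega: "poisson_structure (omega c) dom_phi"
  unfolding omega_eq_wedge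
  by (rule poisson_structure_wedge[OF open_dom_phi has_derivative_omega_field
        omega_field_jacobian_du_plus_dv]) (use dom_phiD in auto)

lemma phi_jacobian_du_plus_dv: "phi_jacobian c x *v du_plus_dv = du_plus_dv"
  unfolding phi_jacobian_def du_plus_dv_def Let_def matrix_vector_mult_vector_4 inner_vector_4
  by simp

lemma phi_jacobian_omega_field:
  assumes "x \<in> dom_phi" "phi_map c x \<in> dom_phi"
  shows "\<exists>\<mu>. phi_jacobian c x *v omega_field c x
    = omega_field c (phi_map c x) + \<mu> *\<^sub>R du_plus_dv"
proof -
  obtain u s v t where x: "x = vector [u, s, v, t]"
    using vector_4_cases by blast
  have nz: "s \<noteq> t" "t \<noteq> 0" "s \<noteq> 0" "u \<noteq> v" "u - v + c \<noteq> 0"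
    using dom_phiD[OF assms(1)] shifted_uv_difference_nonzero[OF assms] unfolding x by auto
  have "phi_jacobian c x *v omega_field c x = omega_field c (phi_map c x)
      + (- c * (n_fun c x * s + s * d_fun c x) / (s - t)^2) *\<^sub>R du_plus_dv"
    using nz unfolding x
    by (simp add: phi_jacobian_def omega_field_def phi_map_def n_fun_def d_fun_def du_plus_dv_def
        Let_def matrix_vector_mult_vector_4 inner_vector_4 vec_eq_iff forall_4 divide_simps;
        simp add: algebra_simps power2_eq_square)
  then show ?thesis ..
qed

lemma phi_jacobian_conj_omega:
  assumes "x \<in> dom_phi" "phi_map c x \<in> dom_phi"
  shows "phi_jacobian c x ** omega c x ** transpose (phi_jacobian c x) = omega c (phi_map c x)"
proof -
  obtain \<mu>
    where "phi_jacobian c x *v omega_field c x = omega_field c (phi_map c x) + \<mu> *\<^sub>R du_plus_dv"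
    using phi_jacobian_omega_field[OF assms] by blast
  then show ?thesis
    unfolding omega_eq_wedge matrix_wedge_transpose phi_jacobian_du_plus_dv
    by (simp add: wedge_add_scaleR_self)
qed

lemma preserves_poisson_omega: "preserves_poisson (phi_map c) (omega c) dom_phi"
  by (rule preserves_poissonI[where J = "phi_jacobian c"])
    (use has_derivative_phi_map phi_jacobian_conj_omega in auto)

section \<open>A symplectic structure and two commuting invariants\<close>

definition du_minus_dv :: "real^4" where
  "du_minus_dv = vector [1, 0, -1, 0]"

definition st_euler :: "real^4 \<Rightarrow> real^4" where
  "st_euler y = vector [0, y$2, 0, y$4]"

definition st_twist :: "real^4 \<Rightarrow> real^4" where
  "st_twist y = vector [0, y$4, 0, - (y$4^2 / y$2)]"

definition liouville_bivector :: "real^4 \<Rightarrow> real^4^4" where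
  "liouville_bivector y =
     wedge du_plus_dv (st_twist y) + wedge (-2 *\<^sub>R du_minus_dv) (st_euler y)"

definition st_euler_jacobian :: "real^4^4" where
  "st_euler_jacobian = vector [0, vector [0, 1, 0, 0], 0, vector [0, 0, 0, 1]]"

definition st_twist_jacobian :: "real^4 \<Rightarrow> real^4^4" where
  "st_twist_jacobian y =
     vector [0, vector [0, 0, 0, 1], 0, vector [0, (y$4 / y$2)^2, 0, - (2 * y$4 / y$2)]]"

lemma has_derivative_st_euler: "(st_euler has_derivative (\<lambda>h. st_euler_jacobian *v h)) (at y)"
  unfolding st_euler_def st_euler_jacobian_def
  by (intro has_derivative_vector_4; (rule derivative_eq_intros refl)+; (rule ext)?;
      simp add: inner_vector_4)

lemma has_derivative_st_twist:
  assumes "y$2 \<noteq> 0"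
  shows "(st_twist has_derivative (\<lambda>h. st_twist_jacobian y *v h)) (at y)"
  unfolding st_twist_def st_twist_jacobian_def
  by (intro has_derivative_vector_4; (rule derivative_eq_intros refl assms)+; (rule ext)?;
      simp add: inner_vector_4 divide_simps power2_eq_square assms; simp add: algebra_simps)

lemma st_jacobians_annihilate_du_plus_dv_du_minus_dv:
  "st_twist_jacobian y *v du_plus_dv = 0" "st_twist_jacobian y *v (-2 *\<^sub>R du_minus_dv) = 0"
  "st_euler_jacobian *v du_plus_dv = 0" "st_euler_jacobian *v (-2 *\<^sub>R du_minus_dv) = 0"
  unfolding st_twist_jacobian_def st_euler_jacobian_def du_plus_dv_def du_minus_dv_def
    matrix_vector_mult_vector_4 inner_vector_4
  by (simp_all add: vec_eq_iff forall_4)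

lemma st_twist_st_euler_commute:
  assumes "y$2 \<noteq> 0"
  shows "st_twist_jacobian y *v st_euler y = st_euler_jacobian *v st_twist y"
  unfolding st_twist_jacobian_def st_euler_jacobian_def st_twist_def st_euler_def
    matrix_vector_mult_vector_4 inner_vector_4
  using assms by (simp add: vec_eq_iff forall_4 power2_eq_square divide_simps)

lemma poisson_structure_liouville_bivector: "poisson_structure liouville_bivector dom_phi"
  unfolding liouville_bivector_def[abs_def]
  by (rule poisson_structure_wedge_pair[OF open_dom_phi has_derivative_st_twist
        has_derivative_st_euler])
    (use dom_phiD st_jacobians_annihilate_du_plus_dv_du_minus_dv st_twist_st_euler_commute
      in auto)

lemma phi_jacobian_st_euler:
  assumes "x \<in> dom_phi"
  shows "phi_jacobian c x *v st_euler x = - st_euler (phi_map c x)"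
proof -
  obtain u s v t where x: "x = vector [u, s, v, t]"
    using vector_4_cases by blast
  show ?thesis
    using dom_phiD[OF assms] unfolding x
    by (simp add: phi_jacobian_def st_euler_def phi_map_def Let_def matrix_vector_mult_vector_4
        inner_vector_4 vec_eq_iff forall_4 divide_simps; simp add: algebra_simps power2_eq_square)
qed

lemma phi_jacobian_st_twist:
  assumes "x \<in> dom_phi" "phi_map c x \<in> dom_phi"
  shows "\<exists>\<mu>. phi_jacobian c x *v st_twist x = st_twist (phi_map c x) + \<mu> *\<^sub>R du_plus_dv"
proof -
  obtain u s v t where x: "x = vector [u, s, v, t]"
    using vector_4_cases by blast
  have nz: "s \<noteq> t" "t \<noteq> 0" "s \<noteq> 0" "u \<noteq> v" "u - v + c \<noteq> 0"
    using dom_phiD[OF assms(1)] shifted_uv_difference_nonzero[OF assms] unfolding x by auto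
  have "phi_jacobian c x *v st_twist x
      = st_twist (phi_map c x) + (- 2 * c * t^2 / (s - t)^2) *\<^sub>R du_plus_dv"
    using nz unfolding x
    by (simp add: phi_jacobian_def st_twist_def phi_map_def du_plus_dv_def Let_def
        matrix_vector_mult_vector_4 inner_vector_4 vec_eq_iff forall_4 divide_simps;
        simp add: algebra_simps power2_eq_square)
  then show ?thesis ..
qed

lemma phi_jacobian_du_minus_dv:
  assumes "x \<in> dom_phi" "phi_map c x \<in> dom_phi"
  shows "\<exists>r. phi_jacobian c x *v (-2 *\<^sub>R du_minus_dv)
    = - (-2 *\<^sub>R du_minus_dv + r *\<^sub>R st_euler (phi_map c x))"
proof -
  obtain u s v t where x: "x = vector [u, s, v, t]"
    using vector_4_cases by blast
  have nz: "s \<noteq> t" "t \<noteq> 0" "s \<noteq> 0" "u \<noteq> v" "u - v + c \<noteq> 0"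
    using dom_phiD[OF assms(1)] shifted_uv_difference_nonzero[OF assms] unfolding x by auto
  have "phi_jacobian c x *v (-2 *\<^sub>R du_minus_dv)
      = - (-2 *\<^sub>R du_minus_dv
           + (- 4 * c / ((u - v) * (u - v + c))) *\<^sub>R st_euler (phi_map c x))"
    using nz unfolding x
    by (simp add: phi_jacobian_def st_euler_def phi_map_def du_minus_dv_def Let_def
        matrix_vector_mult_vector_4 inner_vector_4 vec_eq_iff forall_4 divide_simps;
        simp add: algebra_simps power2_eq_square)
  then show ?thesis ..
qed

lemma phi_jacobian_conj_liouville_bivector:
  assumes "x \<in> dom_phi" "phi_map c x \<in> dom_phi"
  shows "phi_jacobian c x ** liouville_bivector x ** transpose (phi_jacobian c x)
    = liouville_bivector (phi_map c x)"
proof -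
  let ?J = "phi_jacobian c x" and ?b = "-2 *\<^sub>R du_minus_dv"
  obtain \<mu> where \<mu>: "?J *v st_twist x = st_twist (phi_map c x) + \<mu> *\<^sub>R du_plus_dv"
    using phi_jacobian_st_twist[OF assms] by blast
  obtain r where r: "?J *v ?b = - (?b + r *\<^sub>R st_euler (phi_map c x))"
    using phi_jacobian_du_minus_dv[OF assms] by blast
  have "?J ** liouville_bivector x ** transpose ?J
      = wedge (?J *v du_plus_dv) (?J *v st_twist x) + wedge (?J *v ?b) (?J *v st_euler x)"
    by (simp only: liouville_bivector_def matrix_add_ldistrib matrix_add_rdistrib
        matrix_wedge_transpose)
  also have "\<dots> = wedge du_plus_dv (st_twist (phi_map c x) + \<mu> *\<^sub>R du_plus_dv)
      + wedge (- (?b + r *\<^sub>R st_euler (phi_map c x))) (- st_euler (phi_map c x))"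
    by (simp only: \<mu> r phi_jacobian_du_plus_dv phi_jacobian_st_euler[OF assms(1)])
  also have "\<dots> = liouville_bivector (phi_map c x)"
    by (simp only: wedge_add_scaleR_self wedge_uminus wedge_add_left wedge_scaleR_self
        liouville_bivector_def add_0_right)
  finally show ?thesis .
qed

lemma preserves_poisson_liouville_bivector:
  "preserves_poisson (phi_map c) liouville_bivector dom_phi"
  by (rule preserves_poissonI[where J = "phi_jacobian c"])
    (use has_derivative_phi_map phi_jacobian_conj_liouville_bivector in auto)

definition st_ratio :: "real^4 \<Rightarrow> real" where
  "st_ratio y = y$2 / y$4"

definition uv_invariant :: "real \<Rightarrow> real^4 \<Rightarrow> real" where
  "uv_invariant c y = (y$1 - y$3) * (y$1 - y$3 + c)"

lemma st_ratio_phi_map: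
  assumes "x \<in> dom_phi" "phi_map c x \<in> dom_phi"
  shows "st_ratio (phi_map c x) = st_ratio x"
proof -
  obtain u s v t where x: "x = vector [u, s, v, t]"
    using vector_4_cases by blast
  show ?thesis
    using dom_phiD[OF assms(1)] shifted_uv_difference_nonzero[OF assms] unfolding x
    by (simp add: st_ratio_def phi_map_def divide_simps)
qed

lemma uv_invariant_phi_map:
  assumes "x \<in> dom_phi"
  shows "uv_invariant c (phi_map c x) = uv_invariant c x"
proof -
  obtain u s v t where x: "x = vector [u, s, v, t]"
    using vector_4_cases by blast
  show ?thesis
    using dom_phiD[OF assms] unfolding x
    by (simp add: uv_invariant_def phi_map_def divide_simps) (simp add: algebra_simps)
qed

lemma has_derivative_st_ratio:
  assumes "y$4 \<noteq> 0"
  shows "(st_ratio has_derivative (\<lambda>h. vector [0, 1 / y$4, 0, - (y$2 / y$4^2)] \<bullet> h)) (at y)"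
  unfolding st_ratio_def[abs_def]
  by (rule derivative_eq_intros refl assms)+
    (use assms in \<open>simp add: fun_eq_iff inner_vector_4 divide_simps power2_eq_square\<close>)

lemma has_derivative_uv_invariant:
  "(uv_invariant c has_derivative (\<lambda>h. (2 * (y$1 - y$3) + c) *\<^sub>R du_minus_dv \<bullet> h)) (at y)"
  unfolding uv_invariant_def[abs_def] du_minus_dv_def
  by (rule derivative_eq_intros refl)+ (simp add: fun_eq_iff inner_vector_4 algebra_simps)

lemma liouville_bivector_involution:
  assumes "x \<in> dom_phi" "F \<in> {st_ratio, uv_invariant c}" "G \<in> {st_ratio, uv_invariant c}"
  shows "pbracket liouville_bivector F G x = 0"
proof -
  obtain u s v t where x: "x = vector [u, s, v, t]"
    using vector_4_cases by blast
  have nz: "s \<noteq> 0" "t \<noteq> 0"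
    using dom_phiD[OF assms(1)] unfolding x by auto
  have grads: "grad st_ratio x = vector [0, 1 / t, 0, - (s / t^2)]"
    "grad (uv_invariant c) x = (2 * (u - v) + c) *\<^sub>R du_minus_dv"
    using grad_eqI[OF has_derivative_st_ratio] grad_eqI[OF has_derivative_uv_invariant] nz
    unfolding x by simp_all
  from assms(2,3) show ?thesis
    unfolding pbracket_def
    by (elim insertE emptyE;
        simp only: grads liouville_bivector_def matrix_vector_mult_add_rdistrib
          matrix_vector_mult_wedge;
        simp add: x st_twist_def st_euler_def du_plus_dv_def du_minus_dv_def inner_vector_4 nz
          power2_eq_square inner_diff_right inner_add_right; simp add: field_simps nz)
qed

lemma rank_liouville_bivector: "rank (liouville_bivector (vector [1, 2, 0, 1])) = 4"
proof -
  have "det (liouville_bivector (vector [1, 2, 0, 1])) \<noteq> 0"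
    by (simp add: det_4 liouville_bivector_def st_twist_def st_euler_def du_plus_dv_def
        du_minus_dv_def)
  then show ?thesis
    using det_eq_0_rank[of "liouville_bivector (vector [1, 2, 0, 1])"]
      rank_bound[of "liouville_bivector (vector [1, 2, 0, 1])"]
    by simp
qed

lemma gradients_independent:
  assumes "y \<in> dom_phi" "2 * (y$1 - y$3) + c \<noteq> 0"
  shows "distinct (map (\<lambda>F. grad F y) [st_ratio, uv_invariant c])
    \<and> independent (set (map (\<lambda>F. grad F y) [st_ratio, uv_invariant c]))"
proof -
  have "grad (uv_invariant c) y $ 1 \<noteq> 0"
    using assms(2) by (simp add: grad_eqI[OF has_derivative_uv_invariant] du_minus_dv_def)
  then have "grad (uv_invariant c) y \<noteq> 0" by auto
  with independent_pair_vec[of "grad st_ratio y" 2 "grad (uv_invariant c) y"] show ?thesis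
    using dom_phiD[OF assms(1)]
    by (simp add: grad_eqI[OF has_derivative_st_ratio] grad_eqI[OF has_derivative_uv_invariant]
        du_minus_dv_def)
qed

lemma dom_phi_subset_closure:
  "dom_phi \<subseteq> closure {y \<in> dom_phi. 2 * (y$1 - y$3) + c \<noteq> 0}" (is "_ \<subseteq> closure ?S")
proof
  fix x assume x: "x \<in> dom_phi"
  show "x \<in> closure ?S"
    unfolding closure_approachable
  proof (intro allI impI)
    fix \<epsilon> :: real assume "\<epsilon> > 0"
    show "\<exists>y\<in>?S. dist y x < \<epsilon>"
    proof (cases "2 * (x$1 - x$3) + c = 0")
      case False
      then show ?thesis using x \<open>\<epsilon> > 0\<close> by (intro bexI[of _ x]) auto
    next
      case True
      define \<delta> where "\<delta> = min (\<epsilon> / 2) (\<bar>x$1 - x$3\<bar> / 2)"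
      have \<delta>: "0 < \<delta>" "\<delta> < \<epsilon>" "\<delta> < \<bar>x$1 - x$3\<bar>"
        using \<open>\<epsilon> > 0\<close> dom_phiD(4)[OF x] by (auto simp: \<delta>_def min_less_iff_disj)
      define y where "y = x + \<delta> *\<^sub>R axis 1 1"
      have y: "y$1 = x$1 + \<delta>" "y$2 = x$2" "y$3 = x$3" "y$4 = x$4"
        by (simp_all add: y_def axis_def)
      have "y \<in> ?S"
        using dom_phiD[OF x] \<delta> True unfolding dom_phi_def mem_Collect_eq y by auto
      moreover have "dist y x < \<epsilon>"
        using \<delta> by (simp add: y_def dist_norm)
      ultimately show ?thesis ..
    qed
  qed
qed

lemma liouville_integrable_phi_map: "liouville_integrable (phi_map c) dom_phi"
  unfolding liouville_integrable_def
proof (intro exI[of _ liouville_bivector] exI[of _ "2::nat"] exI[of _ "[st_ratio, uv_invariant c]"]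
    conjI)
  show "poisson_structure liouville_bivector dom_phi"
    by (rule poisson_structure_liouville_bivector)
  show "preserves_poisson (phi_map c) liouville_bivector dom_phi"
    by (rule preserves_poisson_liouville_bivector)
  show "\<forall>x\<in>dom_phi. rank (liouville_bivector x) \<le> 2 * 2"
    using rank_bound[of "liouville_bivector _"] by simp
  show "\<exists>x\<in>dom_phi. rank (liouville_bivector x) = 2 * 2"
    using rank_liouville_bivector
    by (intro bexI[of _ "vector [1, 2, 0, 1]"]) (auto simp: dom_phi_def)
  show "length [st_ratio, uv_invariant c] = CARD(4) - 2"
    by simp
  show "\<forall>F\<in>set [st_ratio, uv_invariant c]. \<forall>x\<in>dom_phi. F differentiable at x"
    using differentiableI[OF has_derivative_st_ratio[OF dom_phiD(2)]]
      differentiableI[OF has_derivative_uv_invariant] by auto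
  show "\<forall>F\<in>set [st_ratio, uv_invariant c]. \<forall>x\<in>dom_phi.
      phi_map c x \<in> dom_phi \<longrightarrow> F (phi_map c x) = F x"
    using st_ratio_phi_map uv_invariant_phi_map by auto
  show "\<forall>F\<in>set [st_ratio, uv_invariant c]. \<forall>G\<in>set [st_ratio, uv_invariant c]. \<forall>x\<in>dom_phi.
      pbracket liouville_bivector F G x = 0"
    using liouville_bivector_involution by simp
  show "dom_phi \<subseteq> closure {x \<in> dom_phi.
      distinct (map (\<lambda>F. grad F x) [st_ratio, uv_invariant c])
      \<and> independent (set (map (\<lambda>F. grad F x) [st_ratio, uv_invariant c]))}"
  proof (rule order_trans[OF dom_phi_subset_closure closure_mono])
    show "{y \<in> dom_phi. 2 * (y$1 - y$3) + c \<noteq> 0} \<subseteq> {x \<in> dom_phi.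
        distinct (map (\<lambda>F. grad F x) [st_ratio, uv_invariant c])
        \<and> independent (set (map (\<lambda>F. grad F x) [st_ratio, uv_invariant c]))}"
      using gradients_independent by blast
  qed
qed

theorem proposition3p2:
  fixes p q :: complex
  assumes "p - q \<in> \<real>"
  defines "c \<equiv> Re (p - q)"
  shows "measure_preserving_density (phi_map c) (\<lambda>x. n_fun c x * d_fun c x) dom_phi \<and>
         poisson_structure (omega c) dom_phi \<and> preserves_poisson (phi_map c) (omega c) dom_phi \<and>
         liouville_integrable (phi_map c) dom_phi"
  \<comment> \<open>the four properties hold for every real c; the hypothesis only makes c = p - q\<close>
  using measure_preserving_phi_map poisson_structure_omega preserves_poisson_omega
    liouville_integrable_phi_map by blast

end
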